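(* Let $U(0)\geqslant 1$ and $d\geqslant 1$ be integers, $U(n)=U(0)+nd$, and let $S(n)=\overline{U(0)U(1)\cdots U(n)}$ (right-concatenation), so $S(0)=U(0)$. Let $n\geqslant 0$ and put $$l=\left\lceil \log_{10}(n d + S(0) + 1)\right\rceil,\qquad t_l=\left\lfloor \frac{10^{l-1}-S(0)}{d}\right\rfloor .$$ Assume $t_l\geqslant 0$ and $U(t_l+2)<10^l$. Let $s_0=S(t_l)$, $s_1=S(t_l+1)$, $s_2=S(t_l+2)$ and $$\alpha_l=-\frac{(10^l-1)\,U(t_l)+d\cdot 10^l}{(10^l-1)^2},\qquad \mu_l=-\frac{d}{10^l-1},\qquad \theta_l=\frac{s_2-2 s_1+s_0}{(10^l-1)^2}.$$ Then $$S(n)=\alpha_l+\mu_l\,(n-t_l)+\theta_l\, 10^{l(n-t_l)}.$$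
   Context: For positive integers $a_0,\ldots,a_k$, $\overline{a_0a_1\cdots a_k}$ denotes the integer whose decimal expansion is the decimal expansion of $a_0$ followed by that of $a_1$, ..., followed by that of $a_k$. Note $l$ is the number of decimal digits of $U(n)$. *)

theory Defs
  imports Complex_Main
begin

text \<open>Number of decimal digits of a natural number (intended for positive arguments).\<close>
fun ndigits :: "nat \<Rightarrow> nat" where
  "ndigits m = (if m < 10 then 1 else Suc (ndigits (m div 10)))"

definition concat_dec :: "nat \<Rightarrow> nat \<Rightarrow> nat" where
  "concat_dec a b = a * 10 ^ ndigits b + b"

definition U :: "nat \<Rightarrow> nat \<Rightarrow> nat \<Rightarrow> nat" where
  "U u0 d n = u0 + n * d"

fun S :: "nat \<Rightarrow> nat \<Rightarrow> nat \<Rightarrow> nat" where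
  "S u0 d 0 = U u0 d 0"
| "S u0 d (Suc n) = concat_dec (S u0 d n) (U u0 d (Suc n))"

end

theory Submission
  imports Defs
begin

text \<open>Let \<open>L\<close> be the number of digits of \<open>U(n)\<close>. By the choice of \<open>t\<^sub>l\<close>,
  \<open>U(t\<^sub>l) \<le> 10^(L-1) < U(t\<^sub>l + 1)\<close>, so \<open>U(t\<^sub>l + 1), ..., U(max n (t\<^sub>l + 2))\<close> all have
  exactly \<open>L\<close> digits. On this block \<open>S(k + 1) = 10^L S(k) + U(k + 1)\<close> is an affine recurrence
  with ratio \<open>X = 10^L\<close> and a forcing term linear in \<open>k\<close>; its solutions are
  \<open>\<alpha> + \<mu> m + c X^m\<close> with \<open>m = k - t\<^sub>l\<close>, where \<open>\<alpha> + \<mu> m\<close> is a particular solution. The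
  second difference \<open>s\<^sub>2 - 2 s\<^sub>1 + s\<^sub>0\<close> annihilates the affine part and leaves \<open>c (X - 1)^2\<close>.\<close>

declare ndigits.simps [simp del] S.simps(2) [simp del]

lemma ndigits_pos: "0 < ndigits m"
  by (subst ndigits.simps) simp

lemma less_power_ndigits: "m < 10 ^ ndigits m"
proof (induction m rule: ndigits.induct)
  case (1 m)
  then show ?case by (cases "m < 10") (simp_all add: ndigits.simps[of m])
qed

lemma power_ndigits_le: "0 < m \<Longrightarrow> 10 ^ (ndigits m - 1) \<le> m"
proof (induction m rule: ndigits.induct)
  case (1 m)
  show ?case
  proof (cases "m < 10")
    case False
    then have "10 ^ (ndigits (m div 10) - 1) \<le> m div 10" using "1.IH" by simp
    then have "10 * 10 ^ (ndigits (m div 10) - 1) \<le> m" by linarith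
    then show ?thesis using False ndigits_pos[of "m div 10"]
      by (simp add: ndigits.simps[of m] power_eq_if split: if_splits)
  qed (use "1.prems" in \<open>simp add: ndigits.simps[of m]\<close>)
qed

lemma ndigits_eqI:
  assumes "10 ^ (L - 1) \<le> m" and "m < 10 ^ L" and "1 \<le> L"
  shows "ndigits m = L"
proof (rule antisym)
  have "0 < m" using assms(1) by (metis le_zero_eq not_gr0 power_not_zero zero_neq_numeral)
  have "10 ^ (ndigits m - 1) < (10::nat) ^ L"
    using power_ndigits_le[OF \<open>0 < m\<close>] assms(2) by linarith
  then show "ndigits m \<le> L" using ndigits_pos[of m] by simp
  have "(10::nat) ^ (L - 1) < 10 ^ ndigits m"
    using less_power_ndigits[of m] assms(1) by linarith
  then show "L \<le> ndigits m" using assms(3) by simp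
qed

definition affine_particular_solution :: "'a::field \<Rightarrow> 'a \<Rightarrow> 'a \<Rightarrow> nat \<Rightarrow> 'a" where
  "affine_particular_solution X u d m =
     - ((X - 1) * u + d * X) / (X - 1)^2 - d / (X - 1) * of_nat m"

lemma affine_particular_solution_Suc:
  fixes X u d :: "'a::field"
  assumes "X \<noteq> 1"
  shows "affine_particular_solution X u d (Suc m)
           = X * affine_particular_solution X u d m + (u + of_nat (Suc m) * d)"
proof -
  obtain Y where X: "X = Y + 1" and "Y \<noteq> 0" using \<open>X \<noteq> 1\<close>
    by (metis diff_add_cancel right_minus_eq)
  then show ?thesis
    unfolding affine_particular_solution_def X by (simp add: field_simps power2_eq_square)
qed

lemma affine_recurrence_closed_form:
  fixes s :: "nat \<Rightarrow> 'a::field"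
  assumes "X \<noteq> 1"
    and rec: "\<And>k. k < M \<Longrightarrow> s (Suc k) = X * s k + (u + of_nat (Suc k) * d)"
    and "m \<le> M"
  shows "s m = affine_particular_solution X u d m
               + (s 0 - affine_particular_solution X u d 0) * X ^ m"
  using \<open>m \<le> M\<close>
proof (induction m)
  case (Suc m)
  let ?p = "affine_particular_solution X u d"
  have "s (Suc m) - ?p (Suc m) = X * (s m - ?p m)"
    using rec[of m] Suc.prems affine_particular_solution_Suc[OF \<open>X \<noteq> 1\<close>, of u d m]
    by (simp add: algebra_simps)
  with Suc show ?case by (simp add: diff_eq_eq mult_ac)
qed simp

lemma affine_recurrence_solution:
  fixes s :: "nat \<Rightarrow> 'a::field"
  assumes "X \<noteq> 1"
    and rec: "\<And>k. k < M \<Longrightarrow> s (Suc k) = X * s k + (u + of_nat (Suc k) * d)"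
    and "2 \<le> M" and "m \<le> M"
  shows "s m = affine_particular_solution X u d m
               + (s 2 - 2 * s 1 + s 0) / (X - 1)^2 * X ^ m"
proof -
  let ?p = "affine_particular_solution X u d"
  define c where "c = s 0 - ?p 0"
  have s: "s k = ?p k + c * X ^ k" if "k \<le> M" for k
    using affine_recurrence_closed_form[OF assms(1) rec that] unfolding c_def .
  have s1: "s 1 = ?p 1 + c * X" and s2: "s 2 = ?p 2 + c * X^2"
    using s[of 1] s[of 2] \<open>2 \<le> M\<close> by simp_all
  have p2: "?p 2 = 2 * ?p 1 - ?p 0"
    unfolding affine_particular_solution_def by (simp add: algebra_simps)
  have "s 2 - 2 * s 1 + s 0 = c * (X - 1)^2"
    unfolding s1 s2 p2 c_def by (simp add: algebra_simps power2_eq_square)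
  then have "c = (s 2 - 2 * s 1 + s 0) / (X - 1)^2"
    using \<open>X \<noteq> 1\<close> by simp
  then show ?thesis using s[OF \<open>m \<le> M\<close>] by simp
qed

lemma ceiling_log10_eq_ndigits:
  assumes "0 < m"
  shows "\<lceil>log 10 (real (m + 1))\<rceil> = int (ndigits m)"
proof (rule ceiling_unique)
  let ?L = "ndigits m"
  have "10 powr (real ?L - 1) = real (10 ^ (?L - 1))"
    using ndigits_pos[of m] by (simp add: of_nat_diff flip: powr_realpow)
  also have "\<dots> < real (m + 1)"
    using power_ndigits_le[OF assms] by linarith
  finally have "10 powr (real ?L - 1) < real (m + 1)" .
  then show "real_of_int (int ?L) - 1 < log 10 (real (m + 1))"
    by (simp add: less_log_iff)
  have "real (m + 1) \<le> real (10 ^ ?L)"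
    using less_power_ndigits[of m] by linarith
  then show "log 10 (real (m + 1)) \<le> real_of_int (int ?L)"
    by (simp add: log_le_iff powr_realpow)
qed

lemma U_mono: "i \<le> j \<Longrightarrow> U u0 d i \<le> U u0 d j"
  by (simp add: U_def mult_le_mono1)

lemma U_floor_index_bounds:
  assumes "0 < d" and "\<lfloor>(real p - real u0) / real d\<rfloor> = int k"
  shows "U u0 d k \<le> p" and "p < U u0 d (Suc k)"
proof -
  have "real k * real d \<le> real p - real u0" "real p - real u0 < (real k + 1) * real d"
    using assms by (simp_all add: floor_eq_iff pos_le_divide_eq pos_divide_less_eq)
  then have "real (U u0 d k) \<le> real p" "real p < real (U u0 d (Suc k))"
    unfolding U_def by (simp_all add: algebra_simps)
  then show "U u0 d k \<le> p" "p < U u0 d (Suc k)"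
    by simp_all
qed

lemma S_Suc_within_block:
  assumes "1 \<le> L" and "10 ^ (L - 1) < U u0 d (Suc T)" and "U u0 d N < 10 ^ L"
    and "T \<le> k" and "k < N"
  shows "S u0 d (Suc k) = 10 ^ L * S u0 d k + U u0 d (Suc k)"
proof -
  have "ndigits (U u0 d (Suc k)) = L"
  proof (rule ndigits_eqI)
    show "10 ^ (L - 1) \<le> U u0 d (Suc k)"
      using assms(2) U_mono[of "Suc T" "Suc k" u0 d] \<open>T \<le> k\<close> by simp
    show "U u0 d (Suc k) < 10 ^ L"
      using assms(3) U_mono[of "Suc k" N u0 d] \<open>k < N\<close> by simp
  qed (rule \<open>1 \<le> L\<close>)
  then show ?thesis by (simp add: S.simps(2) concat_dec_def)
qed

lemma S_closed_form_within_block: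
  assumes "1 \<le> L" and "10 ^ (L - 1) < U u0 d (Suc T)" and "U u0 d N < 10 ^ L"
    and "T + 2 \<le> N" and "T \<le> n" and "n \<le> N"
  defines "X \<equiv> (10::real) ^ L"
  shows "real (S u0 d n) = affine_particular_solution X (real (U u0 d T)) (real d) (n - T)
     + (real (S u0 d (T + 2)) - 2 * real (S u0 d (T + 1)) + real (S u0 d T)) / (X - 1)^2
       * X ^ (n - T)"
proof -
  have rec: "real (S u0 d (T + Suc k))
               = X * real (S u0 d (T + k)) + (real (U u0 d T) + real (Suc k) * real d)"
    if "k < N - T" for k
    using S_Suc_within_block[OF assms(1-3), of "T + k"] that unfolding X_def
    by (simp add: U_def algebra_simps)
  have "1 < X"
    unfolding X_def using \<open>1 \<le> L\<close> by (intro one_less_power) simp_all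
  then show ?thesis
    using affine_recurrence_solution[where M = "N - T" and m = "n - T", OF _ rec] assms(4-6)
    by simp
qed

theorem theorem1:
  fixes u0 d n :: nat and l t :: int
  assumes "u0 \<ge> 1" and "d \<ge> 1"
  defines "l \<equiv> \<lceil>log 10 (real (n * d + S u0 d 0 + 1))\<rceil>"
  defines "t \<equiv> \<lfloor>((10::real) powi (l - 1) - real (S u0 d 0)) / real d\<rfloor>"
  assumes "t \<ge> 0"
  assumes "real (U u0 d (nat t + 2)) < (10::real) powi l"
  shows "real (S u0 d n) =
     - ((10 powi l - 1) * real (U u0 d (nat t)) + real d * 10 powi l) / (10 powi l - 1)^2
     + (- real d / (10 powi l - 1)) * (real n - real_of_int t)
     + ((real (S u0 d (nat t + 2)) - 2 * real (S u0 d (nat t + 1)) + real (S u0 d (nat t)))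
          / (10 powi l - 1)^2) * (10::real) powi (l * (int n - t))"
proof -
  define L where "L = ndigits (U u0 d n)"
  define T where "T = nat t"
  have S0: "S u0 d 0 = u0" and Un_pos: "0 < U u0 d n"
    using assms(1) by (simp_all add: U_def)
  have L: "l = int L" "1 \<le> L"
    using ceiling_log10_eq_ndigits[OF Un_pos] ndigits_pos
    unfolding l_def L_def by (simp_all add: S0 U_def add.commute Suc_le_eq)
  have t: "t = int T" using \<open>t \<ge> 0\<close> T_def by simp
  have "l - 1 = int (L - 1)" using L by simp
  then have "\<lfloor>(real (10 ^ (L - 1)) - real u0) / real d\<rfloor> = int T"
    using t unfolding t_def S0 by simp
  then have UT: "U u0 d T \<le> 10 ^ (L - 1)" and UT1: "10 ^ (L - 1) < U u0 d (Suc T)"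
    using U_floor_index_bounds \<open>d \<ge> 1\<close> by auto
  have "U u0 d T \<le> U u0 d n"
    using UT power_ndigits_le[OF Un_pos] unfolding L_def by (rule order.trans)
  then have "T \<le> n" using \<open>d \<ge> 1\<close> by (simp add: U_def)
  have "real (U u0 d (T + 2)) < real (10 ^ L)"
    using assms(6) unfolding T_def[symmetric] L(1) by simp
  then have "U u0 d (max n (T + 2)) < 10 ^ L"
    using less_power_ndigits[of "U u0 d n"] unfolding L_def by (simp add: max_def)
  have "l * (int n - t) = int (L * (n - T))"
    using \<open>T \<le> n\<close> unfolding L(1) t by simp
  then have "(10::real) powi (l * (int n - t)) = (10 ^ L) ^ (n - T)"
    by (simp only: power_int_of_nat power_mult)
  moreover have "(10::real) powi l = 10 ^ L" and "real n - real_of_int t = real (n - T)"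
    using \<open>T \<le> n\<close> unfolding L(1) t by simp_all
  moreover note S_closed_form_within_block
    [OF \<open>1 \<le> L\<close> UT1 \<open>U u0 d (max n (T + 2)) < 10 ^ L\<close> max.cobounded2 \<open>T \<le> n\<close> max.cobounded1]
  ultimately show ?thesis
    unfolding affine_particular_solution_def T_def[symmetric] by simp
qed

end
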